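(* Let $G$ be a finite group, let $s: G \to \mathbb{Z}_2=\{0,1\}$ be a group homomorphism, and let $\lambda: G\times G\to \mathbb{Z}_2$ be a 2-cocycle (i.e. $\lambda(\mathbf{h},\mathbf{k})-\lambda(\mathbf{g}\mathbf{h},\mathbf{k})+\lambda(\mathbf{g},\mathbf{h}\mathbf{k})-\lambda(\mathbf{g},\mathbf{h})=0 \bmod 2$ for all $\mathbf{g},\mathbf{h},\mathbf{k}\in G$) normalized so that $\lambda(\mathbf{1},\mathbf{g})=\lambda(\mathbf{g},\mathbf{1})=0$. Let $G_f=\{\mathbf{g}_\sigma : \mathbf{g}\in G,\ \sigma\in\mathbb{Z}_2\}$ with multiplication $\mathbf{g}_\sigma\mathbf{h}_\tau=(\mathbf{g}\mathbf{h})_{\sigma+\tau+\lambda(\mathbf{g},\mathbf{h})}$, and put $P_f=\mathbf{1}_1$ and $s(\mathbf{g}_\sigma)=s(\mathbf{g})$. Then the following are equivalent: (i) there is NO function $U: G_f\to U(1)$ with $U(\mathbf{1}_0)=1$, $U(P_f)=-1$, and $U(\mathbf{g}_\sigma)\,K^{s(\mathbf{g})}[U(\mathbf{h}_\tau)] = U\big((\mathbf{g}\mathbf{h})_{\sigma+\tau+\lambda(\mathbf{g},\mathbf{h})}\big)$ for all $\mathbf{g}_\sigma,\mathbf{h}_\tau\in G_f$ (i.e. no one-dimensional unitary/antiunitary representation $\mathbf{g}_\sigma\mapsto U(\mathbf{g}_\sigma)K^{s(\mathbf{g})}$ of $G_f$ in which $P_f$ acts as $-1$); (ii) the function $(\mathbf{g},\mathbf{h})\mapsto(-1)^{\lambda(\mathbf{g},\mathbf{h})}$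 represents a non-trivial class in $\mathcal{H}^2(G,U_T(1))$.
   Context: $K$ denotes complex conjugation, $K[z]=\bar z$, and $K^0$ is the identity; $s(\mathbf{g})=1$ means $\mathbf{g}$ acts antiunitarily. $\mathcal{H}^2(G,U_T(1))$ is the second cohomology group of $G$ with coefficients in $U(1)$ on which $\mathbf{g}$ acts by $z\mapsto K^{s(\mathbf{g})}[z]$: a 2-cocycle is a function $\alpha:G\times G\to U(1)$ with $\alpha(\mathbf{g},\mathbf{h})\alpha(\mathbf{g}\mathbf{h},\mathbf{k})=\alpha(\mathbf{g},\mathbf{h}\mathbf{k})K^{s(\mathbf{g})}[\alpha(\mathbf{h},\mathbf{k})]$, and it is trivial if $\alpha(\mathbf{g},\mathbf{h})=\epsilon(\mathbf{g})K^{s(\mathbf{g})}[\epsilon(\mathbf{h})]/\epsilon(\mathbf{g}\mathbf{h})$ for some function $\epsilon:G\to U(1)$. In the paper, condition (i) is phrased as "$G_f$ is enforced to break by the 0D complex-fermion invertible topological order" (a unique ground state that is odd under the fermion parity $P_f$). *)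

theory Defs
  imports "HOL-Algebra.Group" "HOL-Analysis.Analysis"
begin

text \<open>Z2 = {0,1} is modelled by bool, with addition = exclusive or (\<noteq>) and
  0 = False, 1 = True.\<close>

definition Kpow :: "bool \<Rightarrow> complex \<Rightarrow> complex" where
  "Kpow b z = (if b then cnj z else z)"

definition Z2_hom :: "('a, 'b) monoid_scheme \<Rightarrow> ('a \<Rightarrow> bool) \<Rightarrow> bool" where
  "Z2_hom G s \<longleftrightarrow> (\<forall>g\<in>carrier G. \<forall>h\<in>carrier G. s (g \<otimes>\<^bsub>G\<^esub> h) = (s g \<noteq> s h))"

definition normalized_Z2_cocycle :: "('a, 'b) monoid_scheme \<Rightarrow> ('a \<Rightarrow> 'a \<Rightarrow> bool) \<Rightarrow> bool" where
  "normalized_Z2_cocycle G lam \<longleftrightarrow>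
     (\<forall>g\<in>carrier G. \<forall>h\<in>carrier G. \<forall>k\<in>carrier G.
        ((lam h k \<noteq> lam (g \<otimes>\<^bsub>G\<^esub> h) k) \<noteq> (lam g (h \<otimes>\<^bsub>G\<^esub> k) \<noteq> lam g h)) = False)
   \<and> (\<forall>g\<in>carrier G. lam \<one>\<^bsub>G\<^esub> g = False \<and> lam g \<one>\<^bsub>G\<^esub> = False)"

definition Gf_mult :: "('a, 'b) monoid_scheme \<Rightarrow> ('a \<Rightarrow> 'a \<Rightarrow> bool) \<Rightarrow> 'a \<times> bool \<Rightarrow> 'a \<times> bool \<Rightarrow> 'a \<times> bool" where
  "Gf_mult G lam x y = (fst x \<otimes>\<^bsub>G\<^esub> fst y, (snd x \<noteq> snd y) \<noteq> lam (fst x) (fst y))"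

definition odd_1d_rep :: "('a, 'b) monoid_scheme \<Rightarrow> ('a \<Rightarrow> bool) \<Rightarrow> ('a \<Rightarrow> 'a \<Rightarrow> bool)
    \<Rightarrow> ('a \<times> bool \<Rightarrow> complex) \<Rightarrow> bool" where
  "odd_1d_rep G s lam U \<longleftrightarrow>
     (\<forall>g\<in>carrier G. \<forall>\<sigma>. cmod (U (g, \<sigma>)) = 1)
   \<and> U (\<one>\<^bsub>G\<^esub>, False) = 1
   \<and> U (\<one>\<^bsub>G\<^esub>, True) = -1
   \<and> (\<forall>g\<in>carrier G. \<forall>h\<in>carrier G. \<forall>\<sigma> \<tau>.
        U (g, \<sigma>) * Kpow (s g) (U (h, \<tau>)) = U (Gf_mult G lam (g, \<sigma>) (h, \<tau>)))"

definition UT_coboundary :: "('a, 'b) monoid_scheme \<Rightarrow> ('a \<Rightarrow> bool) \<Rightarrow> ('a \<Rightarrow> 'a \<Rightarrow> complex) \<Rightarrow> bool" where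
  "UT_coboundary G s alpha \<longleftrightarrow>
     (\<exists>eps :: 'a \<Rightarrow> complex. (\<forall>g\<in>carrier G. cmod (eps g) = 1) \<and>
        (\<forall>g\<in>carrier G. \<forall>h\<in>carrier G.
           alpha g h = eps g * Kpow (s g) (eps h) / eps (g \<otimes>\<^bsub>G\<^esub> h)))"

definition UT_cocycle :: "('a, 'b) monoid_scheme \<Rightarrow> ('a \<Rightarrow> bool) \<Rightarrow> ('a \<Rightarrow> 'a \<Rightarrow> complex) \<Rightarrow> bool" where
  "UT_cocycle G s alpha \<longleftrightarrow>
     (\<forall>g\<in>carrier G. \<forall>h\<in>carrier G. cmod (alpha g h) = 1) \<and>
     (\<forall>g\<in>carrier G. \<forall>h\<in>carrier G. \<forall>k\<in>carrier G.
        alpha g h * alpha (g \<otimes>\<^bsub>G\<^esub> h) k = alpha g (h \<otimes>\<^bsub>G\<^esub> k) * Kpow (s g) (alpha h k))"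

definition nontrivial_H2_UT :: "('a, 'b) monoid_scheme \<Rightarrow> ('a \<Rightarrow> bool) \<Rightarrow> ('a \<Rightarrow> 'a \<Rightarrow> complex) \<Rightarrow> bool" where
  "nontrivial_H2_UT G s alpha \<longleftrightarrow> UT_cocycle G s alpha \<and> \<not> UT_coboundary G s alpha"

end

theory Submission
  imports Defs
begin

text \<open>Since \<open>g\<^sub>1 = P\<^sub>f g\<^sub>0\<close>, a representation \<open>U\<close> with \<open>U(P\<^sub>f) = -1\<close> satisfies
  \<open>U(g\<^sub>1) = -U(g\<^sub>0)\<close>, so it is determined by \<open>\<epsilon>(g) = U(g\<^sub>0)\<close>; and the representation law for
  \<open>g\<^sub>0 h\<^sub>0 = (gh)\<^bsub>\<lambda>(g,h)\<^esub>\<close> says exactly that \<open>(-1)\<^bsup>\<lambda>\<^esup>\<close> is the coboundary of \<open>\<epsilon>\<close>.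
  Conversely every trivialisation \<open>\<epsilon>\<close> has \<open>\<epsilon>(1) = 1\<close> by normalisation and defines such a \<open>U\<close>.
  As \<open>K\<close> fixes \<open>\<plusminus>1\<close>, the cochain \<open>(-1)\<^bsup>\<lambda>\<^esup>\<close> is always a cocycle, so its class is non-trivial
  precisely when no such \<open>U\<close> exists.\<close>

lemma Kpow_sign: "Kpow b (if c then -1 else 1) = (if c then -1 else 1)"
  by (simp add: Kpow_def)

lemma Kpow_uminus: "Kpow b (- z) = - Kpow b z"
  by (simp add: Kpow_def)

lemma Z2_hom_one:
  assumes "group G" and "Z2_hom G s"
  shows "\<not> s \<one>\<^bsub>G\<^esub>"
  using assms unfolding Z2_hom_def by (metis group.is_monoid monoid.one_closed monoid.r_one)

lemma UT_cocycle_sign: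
  assumes "normalized_Z2_cocycle G lam"
  shows "UT_cocycle G s (\<lambda>g h. if lam g h then -1 else 1)"
  unfolding UT_cocycle_def
proof (intro conjI ballI)
  fix g h k assume "g \<in> carrier G" "h \<in> carrier G" "k \<in> carrier G"
  then have "((lam h k \<noteq> lam (g \<otimes>\<^bsub>G\<^esub> h) k) \<noteq> (lam g (h \<otimes>\<^bsub>G\<^esub> k) \<noteq> lam g h)) = False"
    using assms unfolding normalized_Z2_cocycle_def by blast
  then show "(if lam g h then -1 else 1) * (if lam (g \<otimes>\<^bsub>G\<^esub> h) k then -1 else 1) =
      (if lam g (h \<otimes>\<^bsub>G\<^esub> k) then -1 else 1) * Kpow (s g) (if lam h k then -1 else (1::complex))"
    by (simp add: Kpow_sign split: if_splits) blast
qed simp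

lemma odd_1d_rep_parity:
  fixes G (structure)
  assumes "group G" "Z2_hom G s" "normalized_Z2_cocycle G lam" "odd_1d_rep G s lam U"
    and "g \<in> carrier G"
  shows "U (g, True) = - U (g, False)"
proof -
  interpret group G by (fact assms(1))
  have "U (\<one>, True) * Kpow (s \<one>) (U (g, False)) = U (Gf_mult G lam (\<one>, True) (g, False))"
    using assms(4,5) unfolding odd_1d_rep_def by blast
  moreover have "\<not> lam \<one> g"
    using assms(3,5) unfolding normalized_Z2_cocycle_def by blast
  ultimately show ?thesis
    using assms(4,5) Z2_hom_one[OF assms(1,2)]
    by (simp add: Gf_mult_def Kpow_def odd_1d_rep_def)
qed

lemma odd_1d_rep_imp_UT_coboundary:
  assumes "group G" "Z2_hom G s" "normalized_Z2_cocycle G lam" "odd_1d_rep G s lam U"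
  shows "UT_coboundary G s (\<lambda>g h. if lam g h then -1 else 1)"
  unfolding UT_coboundary_def
proof (intro exI[of _ "\<lambda>g. U (g, False)"] conjI ballI)
  fix g assume "g \<in> carrier G"
  then show "cmod (U (g, False)) = 1"
    using assms(4) unfolding odd_1d_rep_def by blast
next
  fix g h assume g: "g \<in> carrier G" and h: "h \<in> carrier G"
  then have gh: "g \<otimes>\<^bsub>G\<^esub> h \<in> carrier G"
    using assms(1) by (simp add: group.is_monoid monoid.m_closed)
  have law: "U (g, False) * Kpow (s g) (U (h, False)) = U (g \<otimes>\<^bsub>G\<^esub> h, lam g h)"
    using assms(4) g h unfolding odd_1d_rep_def by (simp add: Gf_mult_def)
  have "U (g \<otimes>\<^bsub>G\<^esub> h, False) \<noteq> 0"
    using assms(4) gh unfolding odd_1d_rep_def by (metis norm_zero zero_neq_one)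
  then show "(if lam g h then -1 else 1) =
      U (g, False) * Kpow (s g) (U (h, False)) / U (g \<otimes>\<^bsub>G\<^esub> h, False)"
    unfolding law using odd_1d_rep_parity[OF assms gh] by simp
qed

lemma UT_coboundary_imp_odd_1d_rep:
  fixes G (structure)
  assumes "group G" "Z2_hom G s" "normalized_Z2_cocycle G lam"
    and "UT_coboundary G s (\<lambda>g h. if lam g h then -1 else 1)"
  shows "\<exists>U. odd_1d_rep G s lam U"
proof -
  interpret group G by (fact assms(1))
  obtain eps where unit: "\<And>g. g \<in> carrier G \<Longrightarrow> cmod (eps g) = 1"
    and cobound: "\<And>g h. g \<in> carrier G \<Longrightarrow> h \<in> carrier G \<Longrightarrow>
       (if lam g h then -1 else 1) = eps g * Kpow (s g) (eps h) / eps (g \<otimes> h)"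
    using assms(4) unfolding UT_coboundary_def by blast
  have law: "eps g * Kpow (s g) (eps h) = (if lam g h then - eps (g \<otimes> h) else eps (g \<otimes> h))"
    if g: "g \<in> carrier G" and h: "h \<in> carrier G" for g h
  proof -
    have "eps (g \<otimes> h) \<noteq> 0" using unit[of "g \<otimes> h"] g h by auto
    then show ?thesis using cobound[OF g h] by (simp add: field_simps split: if_splits)
  qed
  have "\<not> lam \<one> \<one>"
    using assms(3) unfolding normalized_Z2_cocycle_def by blast
  then have "eps \<one> * eps \<one> = eps \<one>"
    using law[of \<one> \<one>] Z2_hom_one[OF assms(1,2)] by (simp add: Kpow_def)
  then have eps_one: "eps \<one> = 1"
    using unit[of \<one>] by auto
  define U where "U = (\<lambda>(g, \<sigma>). if \<sigma> then - eps g else eps g)"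
  have "odd_1d_rep G s lam U"
    unfolding odd_1d_rep_def
  proof (intro conjI ballI allI)
    fix g h \<sigma> \<tau> assume g: "g \<in> carrier G" and h: "h \<in> carrier G"
    show "U (g, \<sigma>) * Kpow (s g) (U (h, \<tau>)) = U (Gf_mult G lam (g, \<sigma>) (h, \<tau>))"
      using law[OF g h] by (auto simp: U_def Gf_mult_def Kpow_uminus)
  qed (use unit eps_one in \<open>simp_all add: U_def\<close>)
  then show ?thesis by blast
qed

theorem mainTheorem1:
  fixes G :: "('a, 'b) monoid_scheme"
    and s :: "'a \<Rightarrow> bool"
    and lam :: "'a \<Rightarrow> 'a \<Rightarrow> bool"
  assumes "group G"
    and "finite (carrier G)"
    and "Z2_hom G s"
    and "normalized_Z2_cocycle G lam"
  shows "(\<not> (\<exists>U. odd_1d_rep G s lam U)) \<longleftrightarrow>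
         nontrivial_H2_UT G s (\<lambda>g h. if lam g h then -1 else 1)"
  unfolding nontrivial_H2_UT_def
  using UT_cocycle_sign[OF assms(4)]
    odd_1d_rep_imp_UT_coboundary[OF assms(1,3,4)]
    UT_coboundary_imp_odd_1d_rep[OF assms(1,3,4)]
  by blast

end
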